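(* Assume $\le_m$ and $\le_s$ are compatible. Then the set $\{LM(sp): sp\in\mathcal{SP}^*\text{ is top-irreducible}\}$ is finite; that is, the top-reduced S-Gröbner basis of $\mathcal{SP}$ is finite up to equivalence (sig-polynomials with the same leading pair being identified).
   Context: Let $k$ be a field, $R=k[x_1,\dots,x_n]$, $\mathcal{M}$ the monoid of monomials, $\mathbf{e}_1,\dots,\mathbf{e}_d$ the standard basis of $R^d$, $\mathcal{M}_d=\{m\mathbf{e}_i\}$, $\lambda\cdot(\mu\mathbf{e}_i)=(\lambda\mu)\mathbf{e}_i$, and $m_1\mathbf{e}_i\mid m_2\mathbf{e}_j$ iff $i=j$ and $m_1\mid m_2$. An admissible monomial order $\le_m$: linear order on $\mathcal{M}$ with $1\le_m m$ and $m_1\le_m m_2\Rightarrow tm_1\le_m tm_2$. An admissible module order $\le_s$: linear order on $\mathcal{M}_d$ with $\mathbf{e}_i\le_s m\mathbf{e}_i$ and $m_1\mathbf{e}_i\le_s m_2\mathbf{e}_i\Rightarrow tm_1\mathbf{e}_i\le_s tm_2\mathbf{e}_i$. Compatible: $\sigma\mathbf{e}_j\le_s\tau\mathbf{e}_j\iff\sigma\le_m\tau$ for all $j,\sigma,\tau$. Fix $f_1,\dots,f_d\in R$. $\mathcal{SP}=\{(\mathbf{u},p)\in R^d\times R:\sum_iu_if_i=p\}$, $\mathcal{SP}^*=\mathcal{SP}\setminus\{(\mathbf{0},0)\}$, $\mathbf{NSP}=\{(\mathbf{u},p)\in\mathcal{SP}:p\ne0\}$. For $(\mathbf{u},p)\in\mathcal{SP}^*$: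 signature $lm(\mathbf{u})$ = $\le_s$-largest element of $\mathcal{M}_d$ in the support of $\mathbf{u}$; $lm(p)$ = $\le_m$-leading monomial ($lm(0)=0$); leading pair $LM(\mathbf{u},p)=(lm(\mathbf{u}),lm(p))$. Relations on leading pairs: $(\mathbf{s}',m')\prec_{m,s}(\mathbf{s},m)$ iff $m',m\ne0$ and $\exists\lambda\in\mathcal{M}$: $\lambda m'=m$, $\lambda\mathbf{s}'<_s\mathbf{s}$. $(\mathbf{s}',m')\prec_{s,m}(\mathbf{s},m)$ iff either ($m',m\ne0$ and $\exists\lambda$: $\lambda\mathbf{s}'=\mathbf{s}$, $\lambda m'<_m m$) or ($m'=0$, $m\ne0$, $\mathbf{s}'\mid\mathbf{s}$). $(\mathbf{s}',m')\mid_{super}(\mathbf{s},m)$ iff either ($m',m\ne0$ and $\exists\lambda$: $\lambda\mathbf{s}'=\mathbf{s}$, $\lambda m'=m$) or ($m'=m=0$ and $\mathbf{s}'\mid\mathbf{s}$). A sig-polynomial $sp\in\mathcal{SP}^*$ is top-irreducible if there is no $sp'\in\mathcal{SP}^*$ with $LM(sp')\prec_{m,s}LM(sp)$ or $LM(sp')\prec_{s,m}LM(sp)$, and no $sp'\in\mathcal{SP}^*$ with $LM(sp')\mid_{super}LM(sp)$ and $LM(sp')\ne LM(sp)$. The top-reduced S-Gröbner basis is the set of top-irreducible sig-polynomials. *)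

theory Defs
  imports Main "HOL-Library.Poly_Mapping"
begin

text \<open>Monomials in the variables x_0,...,x_{n-1} are exponent vectors nat =>0 nat
  whose Poly_Mapping.keys lie in {..<n}; multiplication of monomials is addition of exponents,
  the monomial 1 is 0.  Polynomials over a field 'k are finitely supported maps
  from monomials to 'k (Poly_Mapping provides the ring structure).
  Module monomials m e_i are pairs (m, i) with i < d.
  Module elements u in R^d are functions nat => polynomial, zero outside {..<d}.\<close>

type_synonym monom = "nat \<Rightarrow>\<^sub>0 nat"
type_synonym 'k mpoly = "monom \<Rightarrow>\<^sub>0 'k"
type_synonym mmonom = "monom \<times> nat"

definition monoms :: "nat \<Rightarrow> monom set" where
  "monoms n = {m. Poly_Mapping.keys m \<subseteq> {..<n}}"

definition polys :: "nat \<Rightarrow> ('k::zero) mpoly set" where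
  "polys n = {p. Poly_Mapping.keys p \<subseteq> monoms n}"

definition mmonoms :: "nat \<Rightarrow> nat \<Rightarrow> mmonom set" where
  "mmonoms n d = {(m, i). m \<in> monoms n \<and> i < d}"

definition mmult :: "monom \<Rightarrow> mmonom \<Rightarrow> mmonom" where
  "mmult lam s = (lam + fst s, snd s)"

definition mdvd :: "mmonom \<Rightarrow> mmonom \<Rightarrow> bool" where
  "mdvd s t \<longleftrightarrow> snd s = snd t \<and> (\<exists>lam. fst t = lam + fst s)"

definition linear_order_on_rel :: "'a set \<Rightarrow> ('a \<Rightarrow> 'a \<Rightarrow> bool) \<Rightarrow> bool" where
  "linear_order_on_rel A r \<longleftrightarrow>
     (\<forall>x\<in>A. r x x) \<and>
     (\<forall>x\<in>A. \<forall>y\<in>A. r x y \<and> r y x \<longrightarrow> x = y) \<and>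
     (\<forall>x\<in>A. \<forall>y\<in>A. \<forall>z\<in>A. r x y \<and> r y z \<longrightarrow> r x z) \<and>
     (\<forall>x\<in>A. \<forall>y\<in>A. r x y \<or> r y x)"

definition admissible_monomial_order :: "nat \<Rightarrow> (monom \<Rightarrow> monom \<Rightarrow> bool) \<Rightarrow> bool" where
  "admissible_monomial_order n le_m \<longleftrightarrow>
     linear_order_on_rel (monoms n) le_m \<and>
     (\<forall>m\<in>monoms n. le_m 0 m) \<and>
     (\<forall>t\<in>monoms n. \<forall>m1\<in>monoms n. \<forall>m2\<in>monoms n. le_m m1 m2 \<longrightarrow> le_m (t + m1) (t + m2))"

definition admissible_module_order ::
  "nat \<Rightarrow> nat \<Rightarrow> (mmonom \<Rightarrow> mmonom \<Rightarrow> bool) \<Rightarrow> bool" where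
  "admissible_module_order n d le_s \<longleftrightarrow>
     linear_order_on_rel (mmonoms n d) le_s \<and>
     (\<forall>m\<in>monoms n. \<forall>i<d. le_s (0, i) (m, i)) \<and>
     (\<forall>t\<in>monoms n. \<forall>m1\<in>monoms n. \<forall>m2\<in>monoms n. \<forall>i<d.
        le_s (m1, i) (m2, i) \<longrightarrow> le_s (t + m1, i) (t + m2, i))"

definition compatible_orders ::
  "nat \<Rightarrow> nat \<Rightarrow> (monom \<Rightarrow> monom \<Rightarrow> bool) \<Rightarrow> (mmonom \<Rightarrow> mmonom \<Rightarrow> bool) \<Rightarrow> bool" where
  "compatible_orders n d le_m le_s \<longleftrightarrow>
     (\<forall>j<d. \<forall>\<sigma>\<in>monoms n. \<forall>\<tau>\<in>monoms n. le_s (\<sigma>, j) (\<tau>, j) \<longleftrightarrow> le_m \<sigma> \<tau>)"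

definition SP :: "nat \<Rightarrow> nat \<Rightarrow> (nat \<Rightarrow> ('k::field) mpoly) \<Rightarrow> ((nat \<Rightarrow> 'k mpoly) \<times> 'k mpoly) set" where
  "SP n d f = {(u, p). (\<forall>i<d. u i \<in> polys n) \<and> (\<forall>i\<ge>d. u i = 0) \<and> p \<in> polys n \<and>
                       (\<Sum>i<d. u i * f i) = p}"

definition SPstar :: "nat \<Rightarrow> nat \<Rightarrow> (nat \<Rightarrow> ('k::field) mpoly) \<Rightarrow> ((nat \<Rightarrow> 'k mpoly) \<times> 'k mpoly) set" where
  "SPstar n d f = SP n d f - {(\<lambda>_. 0, 0)}"

definition msupp :: "nat \<Rightarrow> (nat \<Rightarrow> ('k::zero) mpoly) \<Rightarrow> mmonom set" where
  "msupp d u = {(m, i). i < d \<and> m \<in> Poly_Mapping.keys (u i)}"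

definition greatest_wrt :: "('a \<Rightarrow> 'a \<Rightarrow> bool) \<Rightarrow> 'a set \<Rightarrow> 'a" where
  "greatest_wrt r A = (THE x. x \<in> A \<and> (\<forall>y\<in>A. r y x))"

definition sig :: "nat \<Rightarrow> (mmonom \<Rightarrow> mmonom \<Rightarrow> bool) \<Rightarrow> (nat \<Rightarrow> ('k::zero) mpoly) \<Rightarrow> mmonom" where
  "sig d le_s u = greatest_wrt le_s (msupp d u)"

text \<open>Leading monomial of a polynomial; None encodes lm(0) = 0.\<close>
definition lmp :: "(monom \<Rightarrow> monom \<Rightarrow> bool) \<Rightarrow> ('k::zero) mpoly \<Rightarrow> monom option" where
  "lmp le_m p = (if p = 0 then None else Some (greatest_wrt le_m (Poly_Mapping.keys p)))"

definition LM :: "nat \<Rightarrow> (monom \<Rightarrow> monom \<Rightarrow> bool) \<Rightarrow> (mmonom \<Rightarrow> mmonom \<Rightarrow> bool) \<Rightarrow>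
                  (nat \<Rightarrow> ('k::zero) mpoly) \<times> 'k mpoly \<Rightarrow> mmonom \<times> monom option" where
  "LM d le_m le_s sp = (sig d le_s (fst sp), lmp le_m (snd sp))"

definition strict :: "('a \<Rightarrow> 'a \<Rightarrow> bool) \<Rightarrow> 'a \<Rightarrow> 'a \<Rightarrow> bool" where
  "strict r x y \<longleftrightarrow> r x y \<and> x \<noteq> y"

definition prec_ms :: "(mmonom \<Rightarrow> mmonom \<Rightarrow> bool) \<Rightarrow> mmonom \<times> monom option \<Rightarrow> mmonom \<times> monom option \<Rightarrow> bool" where
  "prec_ms le_s a b \<longleftrightarrow>
     (case (a, b) of ((s', Some m'), (s, Some m)) \<Rightarrow>
         (\<exists>lam. lam + m' = m \<and> strict le_s (mmult lam s') s)
      | _ \<Rightarrow> False)"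

definition prec_sm :: "(monom \<Rightarrow> monom \<Rightarrow> bool) \<Rightarrow> mmonom \<times> monom option \<Rightarrow> mmonom \<times> monom option \<Rightarrow> bool" where
  "prec_sm le_m a b \<longleftrightarrow>
     (case (a, b) of ((s', Some m'), (s, Some m)) \<Rightarrow>
         (\<exists>lam. mmult lam s' = s \<and> strict le_m (lam + m') m)
      | ((s', None), (s, Some m)) \<Rightarrow> mdvd s' s
      | _ \<Rightarrow> False)"

definition super_dvd :: "mmonom \<times> monom option \<Rightarrow> mmonom \<times> monom option \<Rightarrow> bool" where
  "super_dvd a b \<longleftrightarrow>
     (case (a, b) of ((s', Some m'), (s, Some m)) \<Rightarrow>
         (\<exists>lam. mmult lam s' = s \<and> lam + m' = m)
      | ((s', None), (s, None)) \<Rightarrow> mdvd s' s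
      | _ \<Rightarrow> False)"

definition top_irreducible ::
  "nat \<Rightarrow> nat \<Rightarrow> (nat \<Rightarrow> ('k::field) mpoly) \<Rightarrow> (monom \<Rightarrow> monom \<Rightarrow> bool) \<Rightarrow> (mmonom \<Rightarrow> mmonom \<Rightarrow> bool) \<Rightarrow>
   (nat \<Rightarrow> 'k mpoly) \<times> 'k mpoly \<Rightarrow> bool" where
  "top_irreducible n d f le_m le_s sp \<longleftrightarrow>
     sp \<in> SPstar n d f \<and>
     \<not> (\<exists>sp'\<in>SPstar n d f.
           prec_ms le_s (LM d le_m le_s sp') (LM d le_m le_s sp) \<or>
           prec_sm le_m (LM d le_m le_s sp') (LM d le_m le_s sp)) \<and>
     \<not> (\<exists>sp'\<in>SPstar n d f.
           super_dvd (LM d le_m le_s sp') (LM d le_m le_s sp) \<and>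
           LM d le_m le_s sp' \<noteq> LM d le_m le_s sp)"

end

theory Submission
  imports Defs "HOL.Topological_Spaces"
begin

text \<open>
  The leading pair of a sig-polynomial is ((sigma, i), m) with sigma, m monomials
  (m = None when the polynomial part vanishes).  Call x below y if both pairs lie
  in the same component i, are both of the same kind (m = None or not), and the
  exponent vectors of x are componentwise below those of y.  The heart of the
  argument is that under compatible orders, whenever x is below y in this sense,
  one of the three reduction relations prec_ms, prec_sm, super_dvd relates x to y;
  so the leading pairs of top-irreducible sig-polynomials form an antichain.
  By Dickson's lemma (proved below in its sequence form for finitely many natural
  coordinates) an antichain for finitely many coordinates and finitely many
  classes is finite, which gives the theorem.
\<close>

section \<open>Dickson's lemma\<close>

text \<open>Every sequence of naturals has a non-decreasing subsequence: take a monotone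
  subsequence; if it is non-increasing, it is eventually constant.\<close>
lemma nat_seq_incseq_subseq:
  fixes s :: "nat \<Rightarrow> nat"
  obtains r where "strict_mono r" "incseq (s \<circ> r)"
proof -
  obtain f where f: "strict_mono f" "monoseq (s \<circ> f)"
    using seq_monosub[of s] by (auto simp: comp_def)
  show thesis
  proof (cases "incseq (s \<circ> f)")
    case True
    then show thesis using f(1) that by blast
  next
    case False
    then have dec: "decseq (s \<circ> f)" using f(2) by (simp add: monoseq_iff)
    obtain N where N: "\<And>k. s (f N) \<le> s (f k)"
      using ex_has_least_nat[of "\<lambda>_. True" 0 "\<lambda>k. s (f k)"] by blast
    have const: "s (f (N + i)) = s (f N)" for i
      using decseqD[OF dec, of N "N + i"] N[of "N + i"] by simp
    have "strict_mono (\<lambda>i. f (N + i))" using f(1) by (simp add: strict_mono_def)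
    moreover have "incseq (s \<circ> (\<lambda>i. f (N + i)))" by (simp add: const incseq_def)
    ultimately show thesis using that by blast
  qed
qed

lemma dickson_subseq:
  fixes s :: "nat \<Rightarrow> 'b \<Rightarrow> nat"
  assumes "finite K"
  shows "\<exists>r :: nat \<Rightarrow> nat. strict_mono r \<and> (\<forall>i j. i \<le> j \<longrightarrow> (\<forall>c\<in>K. s (r i) c \<le> s (r j) c))"
  using assms
proof (induction K rule: finite_induct)
  case empty
  show ?case by (intro exI[of _ "\<lambda>i::nat. i"]) (simp add: strict_mono_def)
next
  case (insert c K)
  then obtain r :: "nat \<Rightarrow> nat" where r: "strict_mono r"
    and r_mono: "\<And>i j. i \<le> j \<Longrightarrow> \<forall>c'\<in>K. s (r i) c' \<le> s (r j) c'"
    by blast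
  obtain r' where r': "strict_mono r'" "incseq ((\<lambda>i. s (r i) c) \<circ> r')"
    using nat_seq_incseq_subseq by blast
  have "strict_mono (r \<circ> r')" using r r'(1) by (simp add: strict_mono_def)
  moreover have "\<forall>c'\<in>insert c K. s (r (r' i)) c' \<le> s (r (r' j)) c'" if "i \<le> j" for i j
  proof -
    have "s (r (r' i)) c \<le> s (r (r' j)) c" using incseqD[OF r'(2) that] by simp
    moreover have "r' i \<le> r' j" using that r'(1) by (simp add: strict_mono_less_eq)
    ultimately show ?thesis using r_mono by blast
  qed
  ultimately show ?case unfolding comp_def by blast
qed

lemma finite_antichain:
  fixes g :: "'a \<Rightarrow> 'b \<Rightarrow> nat"
  assumes "finite K" and antichain: "\<And>x y. x \<in> S \<Longrightarrow> y \<in> S \<Longrightarrow> (\<forall>c\<in>K. g x c \<le> g y c) \<Longrightarrow> x = y"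
  shows "finite S"
proof (rule ccontr)
  assume "infinite S"
  then obtain f :: "nat \<Rightarrow> 'a" where f: "inj f" "range f \<subseteq> S"
    using infinite_countable_subset by blast
  obtain r :: "nat \<Rightarrow> nat" where r: "strict_mono r" "\<forall>i j. i \<le> j \<longrightarrow> (\<forall>c\<in>K. g (f (r i)) c \<le> g (f (r j)) c)"
    using dickson_subseq[OF assms(1), of "\<lambda>i. g (f i)"] by blast
  have "f (r 0) = f (r 1)"
    using antichain[of "f (r 0)" "f (r 1)"] f(2) r(2) by auto
  then have "r 0 = r 1" using f(1) by (simp add: inj_eq)
  then show False using strict_monoD[OF r(1), of 0 1] by simp
qed

lemma finite_classified_antichain:
  fixes g :: "'a \<Rightarrow> 'b \<Rightarrow> nat" and cls :: "'a \<Rightarrow> 'c"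
  assumes "finite K" "finite C" "cls ` S \<subseteq> C"
    and antichain: "\<And>x y. x \<in> S \<Longrightarrow> y \<in> S \<Longrightarrow> cls x = cls y \<Longrightarrow> (\<forall>c\<in>K. g x c \<le> g y c) \<Longrightarrow> x = y"
  shows "finite S"
proof -
  have "finite {x \<in> S. cls x = k}" for k
    by (rule finite_antichain[OF \<open>finite K\<close>, of _ g]) (auto intro: antichain)
  then have "finite (\<Union>k\<in>C. {x \<in> S. cls x = k})" using \<open>finite C\<close> by simp
  moreover have "S \<subseteq> (\<Union>k\<in>C. {x \<in> S. cls x = k})" using assms(3) by blast
  ultimately show ?thesis by (rule finite_subset[rotated])
qed

lemma monom_quotient:
  assumes a: "a \<in> monoms n" and b: "b \<in> monoms n"
    and le: "\<forall>c<n. Poly_Mapping.lookup a c \<le> Poly_Mapping.lookup b c"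
  obtains lam where "lam \<in> monoms n" "b = lam + a"
proof
  have "Poly_Mapping.lookup a c = 0" if "\<not> c < n" for c
    using a that unfolding monoms_def by (auto simp: in_keys_iff)
  then have "\<forall>c. Poly_Mapping.lookup a c \<le> Poly_Mapping.lookup b c"
    using le by (metis le0)
  then show "b = (b - a) + a" by (intro poly_mapping_eqI) (simp add: lookup_add lookup_minus)
  have "Poly_Mapping.keys (b - a) \<subseteq> Poly_Mapping.keys b"
    by (auto simp: in_keys_iff lookup_minus)
  then show "b - a \<in> monoms n" using b unfolding monoms_def by blast
qed

lemma monoms_add: "a \<in> monoms n \<Longrightarrow> b \<in> monoms n \<Longrightarrow> a + b \<in> monoms n"
  unfolding monoms_def using keys_add[of a b] by blast

lemma greatest_wrt_in:
  assumes lin: "linear_order_on_rel D r" and "finite A" "A \<noteq> {}" "A \<subseteq> D"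
  shows "greatest_wrt r A \<in> A"
proof -
  have refl: "\<And>x. x \<in> D \<Longrightarrow> r x x"
    and antisym: "\<And>x y. x \<in> D \<Longrightarrow> y \<in> D \<Longrightarrow> r x y \<Longrightarrow> r y x \<Longrightarrow> x = y"
    and trans: "\<And>x y z. x \<in> D \<Longrightarrow> y \<in> D \<Longrightarrow> z \<in> D \<Longrightarrow> r x y \<Longrightarrow> r y z \<Longrightarrow> r x z"
    and total: "\<And>x y. x \<in> D \<Longrightarrow> y \<in> D \<Longrightarrow> r x y \<or> r y x"
    using lin unfolding linear_order_on_rel_def by blast+
  have "\<exists>x\<in>A. \<forall>y\<in>A. r y x" using assms(2-4)
  proof (induction A rule: finite_ne_induct)
    case (singleton x)
    then show ?case using refl by simp
  next
    case (insert x F)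
    then obtain g where g: "g \<in> F" "\<forall>y\<in>F. r y g" by auto
    have D: "x \<in> D" "g \<in> D" "F \<subseteq> D" using insert.prems g(1) by auto
    consider "r g x" | "r x g" using total[OF D(1,2)] by blast
    then show ?case
    proof cases
      case 1
      have "r y x" if "y \<in> insert x F" for y
        using that refl[OF D(1)] trans[OF _ D(2,1) _ 1] g(2) D(3) by blast
      then show ?thesis by blast
    next
      case 2
      then show ?thesis using g by blast
    qed
  qed
  then obtain x where x: "x \<in> A" "\<forall>y\<in>A. r y x" by blast
  have unique: "z = x" if "z \<in> A" "\<forall>y\<in>A. r y z" for z
    using antisym[of z x] x that \<open>A \<subseteq> D\<close> by blast
  show ?thesis unfolding greatest_wrt_def
  proof (rule theI2)
    show "x \<in> A \<and> (\<forall>y\<in>A. r y x)" using x by blast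
    show "z = x" if "z \<in> A \<and> (\<forall>y\<in>A. r y z)" for z using unique that by blast
    show "z \<in> A" if "z \<in> A \<and> (\<forall>y\<in>A. r y z)" for z using that by blast
  qed
qed

lemma sig_in_mmonoms:
  assumes so: "admissible_module_order n d le_s"
    and u: "\<forall>i<d. u i \<in> polys n" "\<forall>i\<ge>d. u i = 0" and nonzero: "u i \<noteq> 0"
  shows "sig d le_s u \<in> mmonoms n d"
proof -
  have lin: "linear_order_on_rel (mmonoms n d) le_s"
    using so unfolding admissible_module_order_def by blast
  have sub: "msupp d u \<subseteq> mmonoms n d"
    using u(1) unfolding msupp_def mmonoms_def polys_def by auto
  have "msupp d u \<subseteq> (\<Union>i<d. Poly_Mapping.keys (u i) \<times> {i})" unfolding msupp_def by auto
  then have fin: "finite (msupp d u)" by (rule finite_subset) auto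
  have "i < d" using u(2) nonzero by (meson not_le)
  moreover obtain t where "t \<in> Poly_Mapping.keys (u i)" using nonzero by (metis all_not_in_conv keys_eq_empty)
  ultimately have "msupp d u \<noteq> {}" unfolding msupp_def by blast
  then show ?thesis using greatest_wrt_in[OF lin fin _ sub] sub unfolding sig_def by blast
qed

lemma lmp_in_monoms:
  assumes mo: "admissible_monomial_order n le_m" and p: "p \<in> polys n"
    and lm: "lmp le_m p = Some m"
  shows "m \<in> monoms n"
proof -
  have lin: "linear_order_on_rel (monoms n) le_m"
    using mo unfolding admissible_monomial_order_def by blast
  have "p \<noteq> 0" and m: "m = greatest_wrt le_m (Poly_Mapping.keys p)"
    using lm unfolding lmp_def by (auto split: if_splits)
  moreover have "Poly_Mapping.keys p \<subseteq> monoms n" using p unfolding polys_def by auto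
  ultimately show ?thesis using greatest_wrt_in[OF lin finite_keys] by auto
qed

lemma LM_in_domain:
  assumes mo: "admissible_monomial_order n le_m" and so: "admissible_module_order n d le_s"
    and sp: "sp \<in> SPstar n d f"
  shows "fst (LM d le_m le_s sp) \<in> mmonoms n d"
    and "snd (LM d le_m le_s sp) = Some m \<Longrightarrow> m \<in> monoms n"
proof -
  obtain u p where up: "sp = (u, p)" by fastforce
  have u: "\<forall>i<d. u i \<in> polys n" "\<forall>i\<ge>d. u i = 0" and p: "p \<in> polys n"
    and sum: "(\<Sum>i<d. u i * f i) = p" and nontriv: "(u, p) \<noteq> (\<lambda>_. 0, 0)"
    using sp up unfolding SPstar_def SP_def by auto
  obtain i where "u i \<noteq> 0" using nontriv sum by fastforce
  then show "fst (LM d le_m le_s sp) \<in> mmonoms n d"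
    using sig_in_mmonoms[OF so u] up by (simp add: LM_def)
  show "m \<in> monoms n" if "snd (LM d le_m le_s sp) = Some m"
    using lmp_in_monoms[OF mo p] that up by (simp add: LM_def)
qed

section \<open>Comparable leading pairs are reducible\<close>

text \<open>If l1 + m' is at most l2 + m', the multiple l1 x witnesses
  super_dvd or prec_sm; otherwise l2 < l1, and the multiple l2 x has the polynomial
  leading monomial of y but the smaller signature l2 sigma' (prec_ms).\<close>
lemma divisible_pairs_reducible:
  assumes mo: "admissible_monomial_order n le_m" and co: "compatible_orders n d le_m le_s"
    and i: "i < d" and mons: "\<sigma>' \<in> monoms n" "m' \<in> monoms n" "l1 \<in> monoms n" "l2 \<in> monoms n"
  defines "x \<equiv> ((\<sigma>', i), Some m')" and "y \<equiv> ((l1 + \<sigma>', i), Some (l2 + m'))"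
  shows "prec_ms le_s x y \<or> prec_sm le_m x y \<or> super_dvd x y"
proof (cases "le_m (l1 + m') (l2 + m')")
  case True
  then show ?thesis
    unfolding x_def y_def prec_sm_def super_dvd_def mmult_def strict_def by auto
next
  case above: False
  have mult: "le_m a b \<Longrightarrow> le_m (t + a) (t + b)" if "t \<in> monoms n" "a \<in> monoms n" "b \<in> monoms n" for t a b
    using mo that unfolding admissible_monomial_order_def by blast
  have "\<not> le_m l1 l2" using mult[OF mons(2) mons(3,4)] above by (metis add.commute)
  then have "le_m l2 l1" and "l2 \<noteq> l1"
    using mo mons(3,4) unfolding admissible_monomial_order_def linear_order_on_rel_def by blast+
  then have "le_m (\<sigma>' + l2) (\<sigma>' + l1)" using mult[OF mons(1) mons(4,3)] by blast
  then have "strict le_s (l2 + \<sigma>', i) (l1 + \<sigma>', i)"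
    using co i monoms_add[OF mons(4,1)] monoms_add[OF mons(3,1)] \<open>l2 \<noteq> l1\<close>
    unfolding compatible_orders_def strict_def by (simp add: add.commute)
  then have "prec_ms le_s x y" unfolding x_def y_def prec_ms_def mmult_def by auto
  then show ?thesis by blast
qed

lemma top_irreducible_no_reducer:
  assumes "top_irreducible n d f le_m le_s sp" "sp' \<in> SPstar n d f"
    and "prec_ms le_s (LM d le_m le_s sp') (LM d le_m le_s sp) \<or>
         prec_sm le_m (LM d le_m le_s sp') (LM d le_m le_s sp) \<or>
         super_dvd (LM d le_m le_s sp') (LM d le_m le_s sp)"
  shows "LM d le_m le_s sp' = LM d le_m le_s sp"
  using assms unfolding top_irreducible_def by blast

text \<open>Encoding of a leading pair by its class (component index, and whether the
  polynomial part vanishes) and its exponents (of the signature monomial for True,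
  of the polynomial's leading monomial for False).\<close>
definition lp_class :: "mmonom \<times> monom option \<Rightarrow> nat \<times> bool" where
  "lp_class x = (snd (fst x), snd x = None)"

definition lp_exponent :: "mmonom \<times> monom option \<Rightarrow> nat \<times> bool \<Rightarrow> nat" where
  "lp_exponent x = (\<lambda>(c, b). Poly_Mapping.lookup (if b then fst (fst x) else case_option 0 id (snd x)) c)"

lemma top_irreducible_antichain:
  assumes mo: "admissible_monomial_order n le_m" and so: "admissible_module_order n d le_s"
    and co: "compatible_orders n d le_m le_s"
    and irr: "top_irreducible n d f le_m le_s sp'" "top_irreducible n d f le_m le_s sp"
    and same_class: "lp_class (LM d le_m le_s sp') = lp_class (LM d le_m le_s sp)"
    and below: "\<forall>cb\<in>{..<n} \<times> UNIV. lp_exponent (LM d le_m le_s sp') cb \<le> lp_exponent (LM d le_m le_s sp) cb"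
  shows "LM d le_m le_s sp' = LM d le_m le_s sp"
proof -
  have sps: "sp' \<in> SPstar n d f" "sp \<in> SPstar n d f" using irr unfolding top_irreducible_def by blast+
  obtain \<sigma>' i q' where x: "LM d le_m le_s sp' = ((\<sigma>', i), q')" by (metis prod.collapse)
  obtain \<sigma> j q where y0: "LM d le_m le_s sp = ((\<sigma>, j), q)" by (metis prod.collapse)
  have "j = i" and none: "q' = None \<longleftrightarrow> q = None"
    using same_class x y0 by (simp_all add: lp_class_def)
  then have y: "LM d le_m le_s sp = ((\<sigma>, i), q)" using y0 by simp
  have i: "i < d" and mons: "\<sigma>' \<in> monoms n" "\<sigma> \<in> monoms n"
    using LM_in_domain(1)[OF mo so sps(1)] LM_in_domain(1)[OF mo so sps(2)] x y
    unfolding mmonoms_def by auto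
  have below_cb: "lp_exponent ((\<sigma>', i), q') (c, b) \<le> lp_exponent ((\<sigma>, i), q) (c, b)" if "c < n" for c b
    using below that x y by simp
  have below_sig: "\<forall>c<n. Poly_Mapping.lookup \<sigma>' c \<le> Poly_Mapping.lookup \<sigma> c"
    using below_cb[of _ True] by (simp add: lp_exponent_def)
  have below_poly: "\<forall>c<n. Poly_Mapping.lookup (case_option 0 id q') c \<le> Poly_Mapping.lookup (case_option 0 id q) c"
    using below_cb[of _ False] by (simp add: lp_exponent_def)
  obtain l1 where l1: "l1 \<in> monoms n" "\<sigma> = l1 + \<sigma>'"
    using monom_quotient[OF mons below_sig] by blast
  have "prec_ms le_s ((\<sigma>', i), q') ((\<sigma>, i), q) \<or> prec_sm le_m ((\<sigma>', i), q') ((\<sigma>, i), q) \<or>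
        super_dvd ((\<sigma>', i), q') ((\<sigma>, i), q)"
  proof (cases q)
    case None
    then have "q' = None" using none by simp
    then have "super_dvd ((\<sigma>', i), q') ((\<sigma>, i), q)"
      using None l1(2) by (auto simp: super_dvd_def mdvd_def)
    then show ?thesis by blast
  next
    case (Some m)
    then obtain m' where m': "q' = Some m'" using none by auto
    have mm: "m' \<in> monoms n" "m \<in> monoms n"
      using LM_in_domain(2)[OF mo so sps(1)] LM_in_domain(2)[OF mo so sps(2)] x y m' Some by auto
    obtain l2 where l2: "l2 \<in> monoms n" "m = l2 + m'"
      using monom_quotient[OF mm] below_poly m' Some by (metis option.simps(5) id_apply)
    show ?thesis
      using divisible_pairs_reducible[OF mo co i mons(1) mm(1) l1(1) l2(1)]
      unfolding l1(2) l2(2) m' Some .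
  qed
  then show ?thesis unfolding x y by (rule top_irreducible_no_reducer[OF irr(2) sps(1), unfolded x y])
qed

theorem mainTheorem6:
  fixes n d :: nat
    and f :: "nat \<Rightarrow> ('k::field) mpoly"
    and le_m :: "monom \<Rightarrow> monom \<Rightarrow> bool"
    and le_s :: "mmonom \<Rightarrow> mmonom \<Rightarrow> bool"
  assumes "\<forall>i<d. f i \<in> polys n"
    and "admissible_monomial_order n le_m"
    and "admissible_module_order n d le_s"
    and "compatible_orders n d le_m le_s"
  shows "finite {LM d le_m le_s sp | sp. top_irreducible n d f le_m le_s sp}"
proof -
  let ?T = "{LM d le_m le_s sp | sp. top_irreducible n d f le_m le_s sp}"
  have classes: "lp_class ` ?T \<subseteq> {..<d} \<times> UNIV"
  proof (rule image_subsetI)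
    fix x assume "x \<in> ?T"
    then obtain sp where "top_irreducible n d f le_m le_s sp" "x = LM d le_m le_s sp" by blast
    then have "fst x \<in> mmonoms n d"
      using LM_in_domain(1)[OF assms(2,3)] unfolding top_irreducible_def by blast
    then show "lp_class x \<in> {..<d} \<times> UNIV" unfolding lp_class_def mmonoms_def by auto
  qed
  have antichain: "x = y"
    if "x \<in> ?T" "y \<in> ?T" "lp_class x = lp_class y"
      and "\<forall>cb\<in>{..<n} \<times> UNIV. lp_exponent x cb \<le> lp_exponent y cb" for x y
    using that top_irreducible_antichain[OF assms(2-4)] by (elim CollectE exE conjE) simp
  show ?thesis
    by (rule finite_classified_antichain[where K = "{..<n} \<times> UNIV" and g = lp_exponent, OF _ _ classes antichain])
      simp_all
qed

end
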